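(* Let $\beta$ be a parameter and consider the map $\varphi:(x_0,x_1,x_2,x_3)\mapsto\big(x_1,x_2,x_3,(x_1x_3+\beta)/x_0\big)$ on $\mathbb{C}^4$, equivalently the recurrence $$x_{n+2}x_{n-2}=x_{n+1}x_{n-1}+\beta.$$ Define $$\mathcal{Q}_0=\frac{x_0+x_2}{x_1},\qquad \mathcal{Q}_1=\frac{x_1+x_3}{x_2},\qquad \mathcal{Q}_2=\frac{x_1}{x_0}+\frac{x_2}{x_3}+\frac{\beta}{x_0x_3},$$ and $$\tilde{\mathcal{J}}_1=\mathcal{Q}_0\mathcal{Q}_1\mathcal{Q}_2-\mathcal{Q}_0-\mathcal{Q}_1-\mathcal{Q}_2,\quad \tilde{\mathcal{J}}_2=\mathcal{Q}_0\mathcal{Q}_1+\mathcal{Q}_1\mathcal{Q}_2+\mathcal{Q}_2\mathcal{Q}_0-3,\quad \tilde{\mathcal{J}}_3=\mathcal{Q}_0\mathcal{Q}_1\mathcal{Q}_2.$$ Then $\varphi$ is superintegrable: $\tilde{\mathcal{J}}_1,\tilde{\mathcal{J}}_2,\tilde{\mathcal{J}}_3$ are three independent conserved quantities of $\varphi$, with $\{\tilde{\mathcal{J}}_1,\tilde{\mathcal{J}}_2\}_0=0=\{\tilde{\mathcal{J}}_1,\tilde{\mathcal{J}}_3\}_0$ and $\{\tilde{\mathcal{J}}_1,\mathcal{Q}_j\}_0=0$ for $j=0,1,2$, where $\{\cdot,\cdot\}_0$ is the Poisson bracket defined by $\{x_0,x_1\}_0=x_0x_1$, $\{x_0,x_2\}_0=0$,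 $\{x_0,x_3\}_0=x_0x_3$, $\{x_1,x_2\}_0=x_1x_2$, $\{x_1,x_3\}_0=0$, $\{x_2,x_3\}_0=x_2x_3$. The iterates satisfy the sixth-order linear recurrence $$x_{n+6}-\tilde{\mathcal{J}}_1\,x_{n+3}+x_n=0,$$ and the solution of the initial value problem is $$x_{3n+j}=\tilde{\mathcal{A}}_j\,T_n(\tilde{\mathcal{J}}_1/2)+\tilde{\mathcal{B}}_j\,U_n(\tilde{\mathcal{J}}_1/2),\qquad j=0,1,2,$$ where $T_n,U_n$ are the Chebyshev polynomials of the first and second kind and $$\tilde{\mathcal{A}}_j=2x_j-\frac{2x_{j+3}}{\tilde{\mathcal{J}}_1},\qquad \tilde{\mathcal{B}}_j=-x_j+\frac{2x_{j+3}}{\tilde{\mathcal{J}}_1},\qquad j=0,1,2.$$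
   Context: A conserved quantity of $\varphi$ is a function $F$ on $\mathbb{C}^4$ with $F\circ\varphi=F$. Superintegrable here means having $3$ (one less than the phase-space dimension) independent conserved quantities. The Poisson bracket is extended to rational functions by bilinearity and the Leibniz rule. The $\mathcal{Q}_j$ and $\tilde{\mathcal{J}}_1$ are evaluated at the initial data $(x_0,x_1,x_2,x_3)$, and $x_3,x_4,x_5$ denote iterates of the recurrence. *)

theory Defs
  imports "HOL-Analysis.Analysis"
begin

text \<open>Points of C^4 are represented as functions nat => complex; only the
entries 0,1,2,3 are meaningful (x i = x_i).\<close>

definition phi :: "complex \<Rightarrow> (nat \<Rightarrow> complex) \<Rightarrow> (nat \<Rightarrow> complex)" where
  "phi \<beta> x = (\<lambda>i. if i < 3 then x (Suc i)
                   else if i = 3 then (x 1 * x 3 + \<beta>) / x 0 else 0)"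

definition Q0 :: "complex \<Rightarrow> (nat \<Rightarrow> complex) \<Rightarrow> complex" where
  "Q0 \<beta> x = (x 0 + x 2) / x 1"

definition Q1 :: "complex \<Rightarrow> (nat \<Rightarrow> complex) \<Rightarrow> complex" where
  "Q1 \<beta> x = (x 1 + x 3) / x 2"

definition Q2 :: "complex \<Rightarrow> (nat \<Rightarrow> complex) \<Rightarrow> complex" where
  "Q2 \<beta> x = x 1 / x 0 + x 2 / x 3 + \<beta> / (x 0 * x 3)"

definition J1 :: "complex \<Rightarrow> (nat \<Rightarrow> complex) \<Rightarrow> complex" where
  "J1 \<beta> x = Q0 \<beta> x * Q1 \<beta> x * Q2 \<beta> x - Q0 \<beta> x - Q1 \<beta> x - Q2 \<beta> x"

definition J2 :: "complex \<Rightarrow> (nat \<Rightarrow> complex) \<Rightarrow> complex" where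
  "J2 \<beta> x = Q0 \<beta> x * Q1 \<beta> x + Q1 \<beta> x * Q2 \<beta> x + Q2 \<beta> x * Q0 \<beta> x - 3"

definition J3 :: "complex \<Rightarrow> (nat \<Rightarrow> complex) \<Rightarrow> complex" where
  "J3 \<beta> x = Q0 \<beta> x * Q1 \<beta> x * Q2 \<beta> x"

definition pd :: "nat \<Rightarrow> ((nat \<Rightarrow> complex) \<Rightarrow> complex) \<Rightarrow> (nat \<Rightarrow> complex) \<Rightarrow> complex" where
  "pd i F x = deriv (\<lambda>t. F (x(i := t))) (x i)"

definition pmat :: "(nat \<Rightarrow> complex) \<Rightarrow> nat \<Rightarrow> nat \<Rightarrow> complex" where
  "pmat x i j =
     (if (i, j) = (0, 1) then x 0 * x 1 else if (i, j) = (1, 0) then - (x 0 * x 1)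
      else if (i, j) = (0, 3) then x 0 * x 3 else if (i, j) = (3, 0) then - (x 0 * x 3)
      else if (i, j) = (1, 2) then x 1 * x 2 else if (i, j) = (2, 1) then - (x 1 * x 2)
      else if (i, j) = (2, 3) then x 2 * x 3 else if (i, j) = (3, 2) then - (x 2 * x 3)
      else 0)"

definition pbr :: "((nat \<Rightarrow> complex) \<Rightarrow> complex) \<Rightarrow> ((nat \<Rightarrow> complex) \<Rightarrow> complex)
                    \<Rightarrow> (nat \<Rightarrow> complex) \<Rightarrow> complex" where
  "pbr F G x = (\<Sum>i<4. \<Sum>j<4. pmat x i j * pd i F x * pd j G x)"

fun chebT :: "nat \<Rightarrow> complex \<Rightarrow> complex" where
  "chebT 0 c = 1"
| "chebT (Suc 0) c = c"
| "chebT (Suc (Suc n)) c = 2 * c * chebT (Suc n) c - chebT n c"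

fun chebU :: "nat \<Rightarrow> complex \<Rightarrow> complex" where
  "chebU 0 c = 1"
| "chebU (Suc 0) c = 2 * c"
| "chebU (Suc (Suc n)) c = 2 * c * chebU (Suc n) c - chebU n c"

end

theory Submission
  imports Defs
begin

text \<open>Along an orbit the ratios q_n = (x_n + x_{n+2}) / x_{n+1} are 3-periodic, and Q0, Q1, Q2
  are q_0, q_1, q_2; so phi permutes the Q_k cyclically and every symmetric function of them,
  in particular J1, J2, J3, is invariant. For the log-canonical bracket,
  {Q_k, Q_l} = 2 (Q_k Q_l - 1) = 2 dJ1/dQ_m for (k, l, m) a cyclic permutation of (0, 1, 2);
  hence {J1, F} is a 3x3 determinant with two equal rows whenever the gradient of F lies in the
  span of the gradients of the Q_k. Finally x_{n+2} = q_n x_{n+1} - x_n is a linear recurrence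
  with 3-periodic coefficients; its monodromy over one period has determinant 1 and trace J1,
  which gives x_{n+6} - J1 x_{n+3} + x_n = 0, and along each residue class modulo 3 this is
  the Chebyshev recurrence with argument J1/2.\<close>

definition grad_Q0 :: "(nat \<Rightarrow> complex) \<Rightarrow> nat \<Rightarrow> complex" where
  "grad_Q0 x i = (if i = 0 then 1 / x 1 else if i = 1 then - (x 0 + x 2) / (x 1)\<^sup>2
     else if i = 2 then 1 / x 1 else 0)"

definition grad_Q1 :: "(nat \<Rightarrow> complex) \<Rightarrow> nat \<Rightarrow> complex" where
  "grad_Q1 x i = (if i = 1 then 1 / x 2 else if i = 2 then - (x 1 + x 3) / (x 2)\<^sup>2
     else if i = 3 then 1 / x 2 else 0)"

definition grad_Q2 :: "complex \<Rightarrow> (nat \<Rightarrow> complex) \<Rightarrow> nat \<Rightarrow> complex" where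
  "grad_Q2 \<beta> x i = (if i = 0 then - x 1 / (x 0)\<^sup>2 - \<beta> / ((x 0)\<^sup>2 * x 3)
     else if i = 1 then 1 / x 0 else if i = 2 then 1 / x 3
     else if i = 3 then - x 2 / (x 3)\<^sup>2 - \<beta> / (x 0 * (x 3)\<^sup>2) else 0)"

lemma less_4_cases: "(i::nat) < 4 \<longleftrightarrow> i = 0 \<or> i = 1 \<or> i = 2 \<or> i = 3"
  by auto

lemma
  assumes "\<forall>i<4. x i \<noteq> 0" and "i < 4"
  shows has_partial_Q0: "((\<lambda>t. Q0 \<beta> (x(i := t))) has_field_derivative grad_Q0 x i) (at (x i))"
    and has_partial_Q1: "((\<lambda>t. Q1 \<beta> (x(i := t))) has_field_derivative grad_Q1 x i) (at (x i))"
    and has_partial_Q2: "((\<lambda>t. Q2 \<beta> (x(i := t))) has_field_derivative grad_Q2 \<beta> x i) (at (x i))"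
  using assms unfolding less_4_cases
  by (auto intro!: derivative_eq_intros
      simp: Q0_def Q1_def Q2_def grad_Q0_def grad_Q1_def grad_Q2_def field_simps power2_eq_square)

lemma
  assumes "\<forall>i<4. x i \<noteq> 0" and "i < 4"
  shows pd_Q0: "pd i (Q0 \<beta>) x = grad_Q0 x i"
    and pd_Q1: "pd i (Q1 \<beta>) x = grad_Q1 x i"
    and pd_Q2: "pd i (Q2 \<beta>) x = grad_Q2 \<beta> x i"
  unfolding pd_def
  by (simp_all add: DERIV_imp_deriv has_partial_Q0[OF assms] has_partial_Q1[OF assms]
      has_partial_Q2[OF assms])

lemma
  fixes \<beta> :: complex and x :: "nat \<Rightarrow> complex"
  assumes "\<forall>i<4. x i \<noteq> 0" and "i < 4"
  defines "q0 \<equiv> Q0 \<beta> x" and "q1 \<equiv> Q1 \<beta> x" and "q2 \<equiv> Q2 \<beta> x"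
  shows pd_J1: "pd i (J1 \<beta>) x =
      (q1 * q2 - 1) * grad_Q0 x i + (q0 * q2 - 1) * grad_Q1 x i + (q0 * q1 - 1) * grad_Q2 \<beta> x i"
    and pd_J2: "pd i (J2 \<beta>) x =
      (q1 + q2) * grad_Q0 x i + (q0 + q2) * grad_Q1 x i + (q0 + q1) * grad_Q2 \<beta> x i"
    and pd_J3: "pd i (J3 \<beta>) x =
      q1 * q2 * grad_Q0 x i + q0 * q2 * grad_Q1 x i + q0 * q1 * grad_Q2 \<beta> x i"
proof -
  note partials = has_partial_Q0[OF assms(1,2)] has_partial_Q1[OF assms(1,2)]
    has_partial_Q2[OF assms(1,2)]
  have x: "x(i := x i) = x"
    by simp
  show "pd i (J1 \<beta>) x =
      (q1 * q2 - 1) * grad_Q0 x i + (q0 * q2 - 1) * grad_Q1 x i + (q0 * q1 - 1) * grad_Q2 \<beta> x i"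
    unfolding pd_def J1_def q0_def q1_def q2_def
    by (rule DERIV_imp_deriv, (rule derivative_eq_intros partials | simp only: x)+)
      (simp add: algebra_simps)
  show "pd i (J2 \<beta>) x =
      (q1 + q2) * grad_Q0 x i + (q0 + q2) * grad_Q1 x i + (q0 + q1) * grad_Q2 \<beta> x i"
    unfolding pd_def J2_def q0_def q1_def q2_def
    by (rule DERIV_imp_deriv, (rule derivative_eq_intros partials | simp only: x)+)
      (simp add: algebra_simps)
  show "pd i (J3 \<beta>) x =
      q1 * q2 * grad_Q0 x i + q0 * q2 * grad_Q1 x i + q0 * q1 * grad_Q2 \<beta> x i"
    unfolding pd_def J3_def q0_def q1_def q2_def
    by (rule DERIV_imp_deriv, (rule derivative_eq_intros partials | simp only: x)+)
      (simp add: algebra_simps)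
qed

definition pform :: "(nat \<Rightarrow> complex) \<Rightarrow> (nat \<Rightarrow> complex) \<Rightarrow> (nat \<Rightarrow> complex) \<Rightarrow> complex" where
  "pform x u v = (\<Sum>i<4. \<Sum>j<4. pmat x i j * u i * v j)"

lemma pbr_eq_pform: "pbr F G x = pform x (\<lambda>i. pd i F x) (\<lambda>j. pd j G x)"
  by (simp add: pbr_def pform_def)

lemma pform_cong: "(\<forall>i<4. u i = u' i) \<Longrightarrow> (\<forall>i<4. v i = v' i) \<Longrightarrow> pform x u v = pform x u' v'"
  by (simp add: pform_def)

lemma pform_explicit:
  "pform x u v = x 0 * x 1 * (u 0 * v 1 - u 1 * v 0) + x 0 * x 3 * (u 0 * v 3 - u 3 * v 0)
     + x 1 * x 2 * (u 1 * v 2 - u 2 * v 1) + x 2 * x 3 * (u 2 * v 3 - u 3 * v 2)"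
  by (simp add: pform_def pmat_def numeral_eq_Suc lessThan_Suc algebra_simps)

lemma pform_lincomb:
  "pform x (\<lambda>i. a0 * u0 i + a1 * u1 i + a2 * u2 i) (\<lambda>j. b0 * u0 j + b1 * u1 j + b2 * u2 j)
     = (a0 * b1 - a1 * b0) * pform x u0 u1 + (a1 * b2 - a2 * b1) * pform x u1 u2
       + (a2 * b0 - a0 * b2) * pform x u2 u0"
  unfolding pform_explicit by (simp add: algebra_simps)

lemma pform_grad_Q:
  assumes "\<forall>i<4. x i \<noteq> 0"
  shows "pform x (grad_Q0 x) (grad_Q1 x) = 2 * (Q0 \<beta> x * Q1 \<beta> x - 1)"
    and "pform x (grad_Q1 x) (grad_Q2 \<beta> x) = 2 * (Q1 \<beta> x * Q2 \<beta> x - 1)"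
    and "pform x (grad_Q2 \<beta> x) (grad_Q0 x) = 2 * (Q2 \<beta> x * Q0 \<beta> x - 1)"
  using assms unfolding less_4_cases
  by (simp_all add: pform_explicit grad_Q0_def grad_Q1_def grad_Q2_def Q0_def Q1_def Q2_def
      field_simps power2_eq_square)

lemma pbr_J1_eq_0_if_grad_in_span_Q:
  assumes nz: "\<forall>i<4. x i \<noteq> 0"
    and grad_G: "\<forall>j<4. pd j G x = a * grad_Q0 x j + b * grad_Q1 x j + c * grad_Q2 \<beta> x j"
  shows "pbr (J1 \<beta>) G x = 0"
proof -
  define p0 p1 p2 where "p0 = Q1 \<beta> x * Q2 \<beta> x - 1" and "p1 = Q0 \<beta> x * Q2 \<beta> x - 1"
    and "p2 = Q0 \<beta> x * Q1 \<beta> x - 1"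
  have "pbr (J1 \<beta>) G x = pform x (\<lambda>i. p0 * grad_Q0 x i + p1 * grad_Q1 x i + p2 * grad_Q2 \<beta> x i)
      (\<lambda>j. a * grad_Q0 x j + b * grad_Q1 x j + c * grad_Q2 \<beta> x j)"
    unfolding pbr_eq_pform p0_def p1_def p2_def
    by (rule pform_cong) (simp_all add: pd_J1[OF nz] grad_G)
  also have "\<dots> = 2 * ((p0 * b - p1 * a) * p2 + (p1 * c - p2 * b) * p0 + (p2 * a - p0 * c) * p1)"
    unfolding pform_lincomb pform_grad_Q[OF nz, where \<beta> = \<beta>] p0_def p1_def p2_def
    by (simp add: algebra_simps)
  also have "\<dots> = 0"
    by (simp add: algebra_simps)
  finally show ?thesis .
qed

lemma
  assumes nz: "\<forall>i<4. x i \<noteq> 0"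
  shows pbr_J1_J2: "pbr (J1 \<beta>) (J2 \<beta>) x = 0"
    and pbr_J1_J3: "pbr (J1 \<beta>) (J3 \<beta>) x = 0"
    and pbr_J1_Q0: "pbr (J1 \<beta>) (Q0 \<beta>) x = 0"
    and pbr_J1_Q1: "pbr (J1 \<beta>) (Q1 \<beta>) x = 0"
    and pbr_J1_Q2: "pbr (J1 \<beta>) (Q2 \<beta>) x = 0"
proof -
  let ?q0 = "Q0 \<beta> x" and ?q1 = "Q1 \<beta> x" and ?q2 = "Q2 \<beta> x"
  show "pbr (J1 \<beta>) (J2 \<beta>) x = 0"
    by (rule pbr_J1_eq_0_if_grad_in_span_Q[OF nz, where a = "?q1 + ?q2" and b = "?q0 + ?q2" and c = "?q0 + ?q1"])
      (simp add: pd_J2[OF nz])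
  show "pbr (J1 \<beta>) (J3 \<beta>) x = 0"
    by (rule pbr_J1_eq_0_if_grad_in_span_Q[OF nz, where a = "?q1 * ?q2" and b = "?q0 * ?q2" and c = "?q0 * ?q1"])
      (simp add: pd_J3[OF nz])
  show "pbr (J1 \<beta>) (Q0 \<beta>) x = 0"
    by (rule pbr_J1_eq_0_if_grad_in_span_Q[OF nz, where a = 1 and b = 0 and c = 0]) (simp add: pd_Q0[OF nz])
  show "pbr (J1 \<beta>) (Q1 \<beta>) x = 0"
    by (rule pbr_J1_eq_0_if_grad_in_span_Q[OF nz, where a = 0 and b = 1 and c = 0]) (simp add: pd_Q1[OF nz])
  show "pbr (J1 \<beta>) (Q2 \<beta>) x = 0"
    by (rule pbr_J1_eq_0_if_grad_in_span_Q[OF nz, where a = 0 and b = 0 and c = 1]) (simp add: pd_Q2[OF nz])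
qed

lemma phi_simps:
  "phi \<beta> x 0 = x 1" "phi \<beta> x 1 = x 2" "phi \<beta> x 2 = x 3" "phi \<beta> x 3 = (x 1 * x 3 + \<beta>) / x 0"
  by (simp_all add: phi_def numeral_eq_Suc)

lemma Q_phi:
  assumes "\<forall>i<4. x i \<noteq> 0" and "phi \<beta> x 3 \<noteq> 0"
  shows "Q0 \<beta> (phi \<beta> x) = Q1 \<beta> x" and "Q1 \<beta> (phi \<beta> x) = Q2 \<beta> x"
    and "Q2 \<beta> (phi \<beta> x) = Q0 \<beta> x"
proof -
  have nz: "x 0 \<noteq> 0" "x 1 \<noteq> 0" "x 2 \<noteq> 0" "x 3 \<noteq> 0" and "x 1 * x 3 + \<beta> \<noteq> 0"
    using assms by (auto simp: phi_simps)
  have "x 3 / (D / x 0) + \<beta> / (x 1 * (D / x 0)) = x 0 * (x 1 * x 3 + \<beta>) / (x 1 * D)"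
    if "D \<noteq> 0" for D
    using that nz by (simp add: field_simps)
  then have "x 3 / ((x 1 * x 3 + \<beta>) / x 0) + \<beta> / (x 1 * ((x 1 * x 3 + \<beta>) / x 0)) = x 0 / x 1"
    using \<open>x 1 * x 3 + \<beta> \<noteq> 0\<close> \<open>x 1 \<noteq> 0\<close> by simp
  then show "Q2 \<beta> (phi \<beta> x) = Q0 \<beta> x"
    unfolding Q0_def Q2_def phi_simps by (simp add: add_divide_distrib)
  show "Q0 \<beta> (phi \<beta> x) = Q1 \<beta> x" "Q1 \<beta> (phi \<beta> x) = Q2 \<beta> x"
    unfolding Q0_def Q1_def Q2_def phi_simps using nz by (simp_all add: field_simps)
qed

lemma
  assumes "\<forall>i<4. x i \<noteq> 0" and "phi \<beta> x 3 \<noteq> 0"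
  shows J1_phi: "J1 \<beta> (phi \<beta> x) = J1 \<beta> x"
    and J2_phi: "J2 \<beta> (phi \<beta> x) = J2 \<beta> x"
    and J3_phi: "J3 \<beta> (phi \<beta> x) = J3 \<beta> x"
  by (simp_all add: J1_def J2_def J3_def Q_phi[OF assms] algebra_simps)

lemma J_gradients_independent:
  assumes nz: "\<forall>i<4. x i \<noteq> 0"
    and Q_distinct: "Q0 \<beta> x \<noteq> Q1 \<beta> x" "Q1 \<beta> x \<noteq> Q2 \<beta> x" "Q0 \<beta> x \<noteq> Q2 \<beta> x"
    and Q_independent: "\<And>u v w. \<forall>i<4. u * grad_Q0 x i + v * grad_Q1 x i + w * grad_Q2 \<beta> x i = 0
      \<Longrightarrow> u = 0 \<and> v = 0 \<and> w = 0"
    and dependence: "\<forall>i<4. a * pd i (J1 \<beta>) x + b * pd i (J2 \<beta>) x + c * pd i (J3 \<beta>) x = 0"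
  shows "a = 0 \<and> b = 0 \<and> c = 0"
proof -
  define q0 q1 q2 where "q0 = Q0 \<beta> x" and "q1 = Q1 \<beta> x" and "q2 = Q2 \<beta> x"
  define f where "f s t = a * (s * t - 1) + b * (s + t) + c * s * t" for s t
  have "\<forall>i<4. f q1 q2 * grad_Q0 x i + f q0 q2 * grad_Q1 x i + f q0 q1 * grad_Q2 \<beta> x i = 0"
    using dependence by (simp add: pd_J1[OF nz] pd_J2[OF nz] pd_J3[OF nz] f_def q0_def q1_def q2_def
        algebra_simps)
  then have f0: "f q1 q2 = 0" "f q0 q2 = 0" "f q0 q1 = 0"
    using Q_independent by blast+
  have "(q1 - q0) * ((a + c) * q2 + b) = f q1 q2 - f q0 q2"
       "(q2 - q1) * ((a + c) * q0 + b) = f q0 q2 - f q0 q1"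
    by (simp_all add: f_def algebra_simps)
  then have lin: "(a + c) * q2 + b = 0" "(a + c) * q0 + b = 0"
    using f0 Q_distinct by (simp_all add: q0_def q1_def q2_def)
  moreover have "(a + c) * (q2 - q0) = ((a + c) * q2 + b) - ((a + c) * q0 + b)"
    by (simp add: algebra_simps)
  ultimately have "(a + c) * (q2 - q0) = 0"
    by simp
  then have "c = - a"
    using Q_distinct by (simp add: q0_def q2_def add_eq_0_iff)
  moreover from this lin have "b = 0"
    by simp
  ultimately show ?thesis
    using f0(1) by (simp add: f_def algebra_simps)
qed

lemma Q_gradients_independent_at:
  fixes \<beta> s :: complex
  defines "x \<equiv> \<lambda>i. if i = 3 then s else 1"
  assumes "s \<noteq> 0" and "s\<^sup>2 + 2 * \<beta> * s - 1 - \<beta> \<noteq> 0"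
    and "\<forall>i<4. u * grad_Q0 x i + v * grad_Q1 x i + w * grad_Q2 \<beta> x i = 0"
  shows "u = 0 \<and> v = 0 \<and> w = 0"
proof -
  \<comment> \<open>the minor of the components 0, 1, 3 is (s^2 + 2 \<beta> s - 1 - \<beta>) / s^2\<close>
  have "u * grad_Q0 x 0 + v * grad_Q1 x 0 + w * grad_Q2 \<beta> x 0 = 0"
       "u * grad_Q0 x 1 + v * grad_Q1 x 1 + w * grad_Q2 \<beta> x 1 = 0"
       "u * grad_Q0 x 3 + v * grad_Q1 x 3 + w * grad_Q2 \<beta> x 3 = 0"
    using assms(4) by auto
  then have uv: "u = w * (1 + \<beta> / s)" "v = w * (1 + \<beta>) / s\<^sup>2" and "v + w = 2 * u"
    using \<open>s \<noteq> 0\<close> by (simp_all add: x_def grad_Q0_def grad_Q1_def grad_Q2_def field_simps)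
  moreover from uv have "s * u = s * w + \<beta> * w" "s\<^sup>2 * v = w + \<beta> * w"
    using \<open>s \<noteq> 0\<close> by (simp_all add: field_simps)
  ultimately have "w * (s\<^sup>2 + 2 * \<beta> * s - 1 - \<beta>) = 0"
    by algebra
  then have "w = 0"
    using assms(3) by simp
  with uv show ?thesis
    by simp
qed

lemma ex_point_J_gradients_independent:
  "\<exists>x. (\<forall>i<4. x i \<noteq> 0) \<and>
     (\<forall>a b c. (\<forall>i<4. a * pd i (J1 \<beta>) x + b * pd i (J2 \<beta>) x + c * pd i (J3 \<beta>) x = 0)
        \<longrightarrow> a = 0 \<and> b = 0 \<and> c = 0)"
proof -
  obtain s :: complex where s: "s \<noteq> 0" "s \<noteq> 1" "1 + \<beta> \<noteq> s" "1 + \<beta> \<noteq> s\<^sup>2"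
    "s\<^sup>2 + 2 * \<beta> * s - 1 - \<beta> \<noteq> 0"
  proof (cases "\<beta> \<in> {-1, 1, 3}")
    case True
    then show ?thesis
      by (intro that[of 3]) (auto simp: power2_eq_square)
  next
    case False
    moreover have "(2::complex)\<^sup>2 + 2 * \<beta> * 2 - 1 - \<beta> = 3 * (\<beta> + 1)"
      by (simp add: algebra_simps power2_eq_square)
    ultimately show ?thesis
      by (intro that[of 2]) (auto simp: power2_eq_square add_eq_0_iff2)
  qed
  define x :: "nat \<Rightarrow> complex" where "x = (\<lambda>i. if i = 3 then s else 1)"
  have nz: "\<forall>i<4. x i \<noteq> 0"
    using s by (simp add: x_def)
  have Q: "Q0 \<beta> x = 2" "Q1 \<beta> x = 1 + s" "Q2 \<beta> x = 1 + (1 + \<beta>) / s"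
    using s by (simp_all add: x_def Q0_def Q1_def Q2_def field_simps)
  have Q_distinct: "Q0 \<beta> x \<noteq> Q1 \<beta> x" "Q1 \<beta> x \<noteq> Q2 \<beta> x" "Q0 \<beta> x \<noteq> Q2 \<beta> x"
    unfolding Q using s by (simp_all add: field_simps power2_eq_square)
  have "a = 0 \<and> b = 0 \<and> c = 0"
    if "\<forall>i<4. a * pd i (J1 \<beta>) x + b * pd i (J2 \<beta>) x + c * pd i (J3 \<beta>) x = 0" for a b c
    using that J_gradients_independent[OF nz Q_distinct] Q_gradients_independent_at[OF s(1,5)]
    unfolding x_def by blast
  with nz show ?thesis
    by blast
qed

lemma chebyshev_recurrence_solution:
  fixes y :: "nat \<Rightarrow> complex"
  assumes "\<And>n. y (n + 2) = 2 * c * y (n + 1) - y n"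
    and "y 0 = A + B" and "y 1 = A * c + B * (2 * c)"
  shows "y n = A * chebT n c + B * chebU n c"
proof -
  have "y n = A * chebT n c + B * chebU n c \<and> y (Suc n) = A * chebT (Suc n) c + B * chebU (Suc n) c"
  proof (induction n)
    case 0
    then show ?case
      using assms(2,3) by simp
  next
    case (Suc n)
    have "y (Suc (Suc n)) = 2 * c * y (Suc n) - y n"
      using assms(1)[of n] by simp
    with Suc.IH show ?case
      by (simp add: algebra_simps)
  qed
  then show ?thesis ..
qed

definition ratio :: "(nat \<Rightarrow> complex) \<Rightarrow> nat \<Rightarrow> complex" where
  "ratio x n = (x n + x (n + 2)) / x (n + 1)"

context
  fixes \<beta> :: complex and x :: "nat \<Rightarrow> complex"
  assumes orbit_nonzero: "\<And>n. x n \<noteq> 0"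
    and orbit_step: "\<And>n. x (n + 4) = (x (n + 1) * x (n + 3) + \<beta>) / x n"
begin

lemma orbit_linear_step: "x (n + 2) = ratio x n * x (n + 1) - x n"
  using orbit_nonzero[of "n + 1"] by (simp add: ratio_def field_simps)

lemma ratio_periodic: "ratio x (n + 3) = ratio x n"
proof -
  have "x n * x (n + 4) = x (n + 1) * x (n + 3) + \<beta>"
       "x (n + 1) * x (n + 5) = x (n + 2) * x (n + 4) + \<beta>"
    using orbit_step[of n] orbit_step[of "n + 1"] orbit_nonzero[of n] orbit_nonzero[of "n + 1"]
    by (simp_all add: field_simps)
  then have "(x (n + 3) + x (n + 5)) * x (n + 1) = (x n + x (n + 2)) * x (n + 4)"
    by (simp add: algebra_simps)
  moreover have idx: "n + 3 + 2 = n + 5" "n + 3 + 1 = n + 4"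
    by simp_all
  ultimately show ?thesis
    using orbit_nonzero[of "n + 1"] orbit_nonzero[of "n + 4"]
    unfolding ratio_def idx by (simp add: frac_eq_eq)
qed

lemma Q_eq_ratio: "Q0 \<beta> x = ratio x 0" "Q1 \<beta> x = ratio x 1" "Q2 \<beta> x = ratio x 2"
proof -
  show "Q0 \<beta> x = ratio x 0" "Q1 \<beta> x = ratio x 1"
    by (simp_all add: Q0_def Q1_def ratio_def numeral_eq_Suc)
  have "ratio x 2 = (x 2 + x 4) / x 3"
    unfolding ratio_def by (simp add: numeral_eq_Suc)
  moreover have "x 4 = (x 1 * x 3 + \<beta>) / x 0"
    using orbit_step[of 0] by simp
  ultimately show "Q2 \<beta> x = ratio x 2"
    using orbit_nonzero[of 0] orbit_nonzero[of 3] unfolding Q2_def by (simp add: field_simps)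
qed

lemma J1_eq_ratio:
  "J1 \<beta> x = ratio x n * ratio x (n + 1) * ratio x (n + 2) - ratio x n - ratio x (n + 1) - ratio x (n + 2)"
proof (induction n)
  case 0
  then show ?case
    by (simp add: J1_def Q_eq_ratio numeral_eq_Suc)
next
  case (Suc n)
  have "ratio x (Suc n + 2) = ratio x n"
    using ratio_periodic[of n] by (simp add: eval_nat_numeral)
  with Suc.IH show ?case
    by (simp add: algebra_simps eval_nat_numeral)
qed

lemma orbit_linear_recurrence: "x (n + 6) - J1 \<beta> x * x (n + 3) + x n = 0"
proof -
  let ?r = "ratio x"
  have step: "x (n + 6) = ?r (n + 1) * x (n + 5) - x (n + 4)"
       "x (n + 5) = ?r n * x (n + 4) - x (n + 3)"
       "x (n + 4) = ?r (n + 2) * x (n + 3) - x (n + 2)"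
       "x (n + 3) = ?r (n + 1) * x (n + 2) - x (n + 1)"
       "x (n + 2) = ?r n * x (n + 1) - x n"
    using orbit_linear_step[of "n + 4"] orbit_linear_step[of "n + 3"] orbit_linear_step[of "n + 2"]
      orbit_linear_step[of "n + 1"] orbit_linear_step[of n]
      ratio_periodic[of "n + 1"] ratio_periodic[of n]
    by (simp_all add: eval_nat_numeral)
  show ?thesis
    unfolding step J1_eq_ratio[of n] by (simp add: algebra_simps)
qed

lemma orbit_chebyshev:
  assumes "J1 \<beta> x \<noteq> 0"
  shows "x (3 * n + j) = (2 * x j - 2 * x (j + 3) / J1 \<beta> x) * chebT n (J1 \<beta> x / 2)
    + (- x j + 2 * x (j + 3) / J1 \<beta> x) * chebU n (J1 \<beta> x / 2)"
proof (rule chebyshev_recurrence_solution[where y = "\<lambda>n. x (3 * n + j)"])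
  show "x (3 * (m + 2) + j) = 2 * (J1 \<beta> x / 2) * x (3 * (m + 1) + j) - x (3 * m + j)" for m
    using orbit_linear_recurrence[of "3 * m + j"] by (simp add: algebra_simps)
  show "x (3 * 1 + j) = (2 * x j - 2 * x (j + 3) / J1 \<beta> x) * (J1 \<beta> x / 2)
      + (- x j + 2 * x (j + 3) / J1 \<beta> x) * (2 * (J1 \<beta> x / 2))"
    using assms by (simp add: field_simps)
qed simp

end

theorem theorem3p9:
  fixes \<beta> :: complex
  shows
    \<comment> \<open>conserved quantities (on the domain where both sides are defined)\<close>
    "(\<forall>x. (\<forall>i<4. x i \<noteq> 0) \<and> phi \<beta> x 3 \<noteq> 0 \<longrightarrow>
          J1 \<beta> (phi \<beta> x) = J1 \<beta> x \<and> J2 \<beta> (phi \<beta> x) = J2 \<beta> x \<and> J3 \<beta> (phi \<beta> x) = J3 \<beta> x)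
   \<and> \<comment> \<open>functional independence: gradients linearly independent at some regular point\<close>
     (\<exists>x. (\<forall>i<4. x i \<noteq> 0) \<and>
          (\<forall>a b c. (\<forall>i<4. a * pd i (J1 \<beta>) x + b * pd i (J2 \<beta>) x + c * pd i (J3 \<beta>) x = 0)
                   \<longrightarrow> a = 0 \<and> b = 0 \<and> c = 0))
   \<and> \<comment> \<open>Poisson brackets\<close>
     (\<forall>x. (\<forall>i<4. x i \<noteq> 0) \<longrightarrow>
          pbr (J1 \<beta>) (J2 \<beta>) x = 0 \<and> pbr (J1 \<beta>) (J3 \<beta>) x = 0 \<and>
          pbr (J1 \<beta>) (Q0 \<beta>) x = 0 \<and> pbr (J1 \<beta>) (Q1 \<beta>) x = 0 \<and> pbr (J1 \<beta>) (Q2 \<beta>) x = 0)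
   \<and> \<comment> \<open>linear recurrence and explicit solution along orbits\<close>
     (\<forall>x :: nat \<Rightarrow> complex.
        (\<forall>n. x n \<noteq> 0) \<and> (\<forall>n. x (n + 4) = (x (n + 1) * x (n + 3) + \<beta>) / x n) \<longrightarrow>
        (\<forall>n. x (n + 6) - J1 \<beta> x * x (n + 3) + x n = 0) \<and>
        (J1 \<beta> x \<noteq> 0 \<longrightarrow>
          (\<forall>n. \<forall>j<3. x (3 * n + j) =
              (2 * x j - 2 * x (j + 3) / J1 \<beta> x) * chebT n (J1 \<beta> x / 2)
              + (- x j + 2 * x (j + 3) / J1 \<beta> x) * chebU n (J1 \<beta> x / 2))))"
  by (simp add: J1_phi J2_phi J3_phi ex_point_J_gradients_independent
      pbr_J1_J2 pbr_J1_J3 pbr_J1_Q0 pbr_J1_Q1 pbr_J1_Q2 orbit_linear_recurrence orbit_chebyshev)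

end
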